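(* Let $\Delta t>0$, $t_n=n\Delta t$, and let $v_h^0\in W_h$, $k_h^0$ be given. Suppose $v_h^{n+1}\in W_h$, $q_h^{n+1}\in Q_h$, $k_h^{n+1}\in\mathbb{R}$, $n=0,\dots,N-1$, satisfy for all $w_h\in W_h$, $p_h\in Q_h$: \[ \Big(\frac{v_h^{n+1}-v_h^n}{\Delta t},w_h\Big)+(\nu+\mu\tau k_h^n)(\nabla v_h^{n+1},\nabla w_h)+b(v_h^n,v_h^{n+1},w_h)-(\nabla\cdot w_h,q_h^{n+1})=(f^{n+1},w_h), \] \[ (\nabla\cdot v_h^{n+1},p_h)=0,\qquad \frac{k_h^{n+1}-k_h^n}{\Delta t}+\frac{\sqrt2}{2}\tau^{-1}k_h^{n+1}=\frac{1}{|\Omega|}\int_\Omega\mu\tau k_h^n|\nabla v_h^{n+1}|^2dx . \] Then, with a constant $C$ independent of $\Delta t$ and $N$, \[ \|v_h^N\|^2+2|\Omega|k_h^N+\Delta t\sum_{n=0}^{N-1}\Big(\nu\|\nabla v_h^{n+1}\|^2+\sqrt2\tau^{-1}|\Omega|k_h^{n+1}\Big)+\sum_{n=0}^{N-1}\|v_h^{n+1}-v_h^n\|^2\le\sum_{n=0}^{N-1}C\Delta t\|f^{n+1}\|^2+\|v_h^0\|^2+2|\Omega|k_h^0 . \]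
   Context: $\Omega\subset\mathbb{R}^d$ ($d=2,3$) is a bounded domain with measure $|\Omega|$; $(\cdot,\cdot)$, $\|\cdot\|$ are the $L^2(\Omega)$ inner product and norm; $\nu,\mu,\tau>0$ are constants; $f^{n+1}=f(\cdot,t_{n+1})$. $W_h\subset H_0^1(\Omega)^d$ and $Q_h\subset L_0^2(\Omega)$ are continuous piecewise polynomial finite element spaces of degree $r\ge2$ and $r-1$ on a regular quasi-uniform triangulation, satisfying the discrete inf-sup condition. The trilinear form is $b(u,v,w)=\tfrac12((u\cdot\nabla)v,w)-\tfrac12((u\cdot\nabla)w,v)$. *)

theory Defs
  imports "HOL-Analysis.Analysis"
begin

section \<open>Differential operators (pointwise, a.e. meaningful for piecewise polynomials)\<close>

definition pd :: "(real^'d \<Rightarrow> real) \<Rightarrow> 'd \<Rightarrow> real^'d \<Rightarrow> real" where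
  "pd g j x = deriv (\<lambda>s. g (x + s *\<^sub>R axis j 1)) 0"

definition gradsq :: "(real^'d \<Rightarrow> real^'d) \<Rightarrow> real^'d \<Rightarrow> real" where
  "gradsq v x = (\<Sum>i\<in>UNIV. \<Sum>j\<in>UNIV. (pd (\<lambda>y. v y $ i) j x)^2)"

definition divg :: "(real^'d \<Rightarrow> real^'d) \<Rightarrow> real^'d \<Rightarrow> real" where
  "divg w x = (\<Sum>i\<in>UNIV. pd (\<lambda>y. w y $ i) i x)"

definition convec :: "(real^'d \<Rightarrow> real^'d) \<Rightarrow> (real^'d \<Rightarrow> real^'d) \<Rightarrow> real^'d \<Rightarrow> real^'d" where
  "convec u v x = (\<chi> i. \<Sum>j\<in>UNIV. u x $ j * pd (\<lambda>y. v y $ i) j x)"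

definition L2ip :: "(real^'d) set \<Rightarrow> (real^'d \<Rightarrow> real^'d) \<Rightarrow> (real^'d \<Rightarrow> real^'d) \<Rightarrow> real" where
  "L2ip \<Omega> v w = (LINT x:\<Omega>|lebesgue. v x \<bullet> w x)"

definition L2ips :: "(real^'d) set \<Rightarrow> (real^'d \<Rightarrow> real) \<Rightarrow> (real^'d \<Rightarrow> real) \<Rightarrow> real" where
  "L2ips \<Omega> p q = (LINT x:\<Omega>|lebesgue. p x * q x)"

definition gradip :: "(real^'d) set \<Rightarrow> (real^'d \<Rightarrow> real^'d) \<Rightarrow> (real^'d \<Rightarrow> real^'d) \<Rightarrow> real" where
  "gradip \<Omega> v w = (LINT x:\<Omega>|lebesgue.
      \<Sum>i\<in>UNIV. \<Sum>j\<in>UNIV. pd (\<lambda>y. v y $ i) j x * pd (\<lambda>y. w y $ i) j x)"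

definition btri :: "(real^'d) set \<Rightarrow> (real^'d \<Rightarrow> real^'d) \<Rightarrow> (real^'d \<Rightarrow> real^'d) \<Rightarrow> (real^'d \<Rightarrow> real^'d) \<Rightarrow> real" where
  "btri \<Omega> u v w = 1/2 * L2ip \<Omega> (convec u v) w - 1/2 * L2ip \<Omega> (convec u w) v"

definition L2field :: "(real^'d) set \<Rightarrow> (real^'d \<Rightarrow> real^'d) \<Rightarrow> bool" where
  "L2field \<Omega> g \<longleftrightarrow> g \<in> borel_measurable lebesgue \<and> set_integrable lebesgue \<Omega> (\<lambda>x. (norm (g x))^2)"

definition triangulation :: "(real^'d) set \<Rightarrow> (real^'d) set set \<Rightarrow> bool" where
  "triangulation \<Omega> T \<longleftrightarrow> finite T \<and>
     (\<forall>S\<in>T. finite S \<and> card S = CARD('d) + 1 \<and> \<not> affine_dependent S) \<and>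
     (\<forall>S1\<in>T. \<forall>S2\<in>T. convex hull S1 \<inter> convex hull S2 = convex hull (S1 \<inter> S2)) \<and>
     \<Union>{convex hull S | S. S \<in> T} = closure \<Omega>"

definition poly_on :: "(real^'d) set \<Rightarrow> nat \<Rightarrow> (real^'d \<Rightarrow> real) \<Rightarrow> bool" where
  "poly_on K r p \<longleftrightarrow> (\<exists>c :: ('d \<Rightarrow> nat) \<Rightarrow> real. \<forall>x\<in>K.
      p x = (\<Sum>\<alpha>\<in>{\<alpha>::'d \<Rightarrow> nat. sum \<alpha> UNIV \<le> r}. c \<alpha> * (\<Prod>i\<in>UNIV. (x $ i) ^ (\<alpha> i))))"

text \<open>W_h: continuous piecewise polynomial vector fields of degree r, vanishing outside Omega
  (hence on the boundary): a conforming subspace of H_0^1(Omega)^d.\<close>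
definition Wh :: "(real^'d) set \<Rightarrow> (real^'d) set set \<Rightarrow> nat \<Rightarrow> (real^'d \<Rightarrow> real^'d) set" where
  "Wh \<Omega> T r = {v. continuous_on UNIV v \<and> (\<forall>x. x \<notin> \<Omega> \<longrightarrow> v x = 0) \<and>
      (\<forall>S\<in>T. \<forall>i. poly_on (convex hull S) r (\<lambda>x. v x $ i))}"

definition Qh :: "(real^'d) set \<Rightarrow> (real^'d) set set \<Rightarrow> nat \<Rightarrow> (real^'d \<Rightarrow> real) set" where
  "Qh \<Omega> T r = {q. continuous_on (closure \<Omega>) q \<and>
      (\<forall>S\<in>T. poly_on (convex hull S) (r - 1) q) \<and> (LINT x:\<Omega>|lebesgue. q x) = 0}"

definition inf_sup :: "(real^'d) set \<Rightarrow> (real^'d \<Rightarrow> real^'d) set \<Rightarrow> (real^'d \<Rightarrow> real) set \<Rightarrow> bool" where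
  "inf_sup \<Omega> W Q \<longleftrightarrow> (\<exists>\<beta>>0. \<forall>q\<in>Q.
      \<beta> * sqrt (L2ips \<Omega> q q) \<le>
      (SUP w\<in>{w\<in>W. gradip \<Omega> w w \<noteq> 0}. L2ips \<Omega> (divg w) q / sqrt (gradip \<Omega> w w)))"

end

(*
  Test the momentum equation with w = v^(n+1). The convection term vanishes since
  b(u, v, v) = 0, the pressure term vanishes since v^(n+1) is discretely divergence free, and
  2 (v^(n+1) - v^n, v^(n+1)) = |v^(n+1)|^2 - |v^n|^2 + |v^(n+1) - v^n|^2. The additional
  dissipation mu tau k^n |grad v^(n+1)|^2 is cancelled exactly by |Omega| times the equation for k.
  The forcing is absorbed by Young's inequality and the Friedrichs inequality
  |w|^2 <= 4 R^2 |grad w|^2 on W_h (Omega inside the ball of radius R), which follows by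
  integrating the one-dimensional inequality int g^2 <= 4 R^2 int g'^2 along coordinate lines:
  there a function of W_h is continuous and piecewise polynomial. Summing the one-step
  inequalities telescopes. The constant is C = 4 R^2 / nu.
*)
theory Submission
  imports Defs
begin

section \<open>One-dimensional Friedrichs inequality\<close>

lemma poincare_interval_has_integral:
  fixes g g' :: "real \<Rightarrow> real"
  assumes R: "R > 0" and cont: "continuous_on {-R..R} g" and ends: "g (-R) = 0" "g R = 0"
    and K: "finite K" and der: "\<And>s. s \<in> {-R<..<R} - K \<Longrightarrow> (g has_real_derivative g' s) (at s)"
    and h1: "((\<lambda>s. (g s)\<^sup>2) has_integral J1) {-R..R}"
    and h2: "((\<lambda>s. (g' s)\<^sup>2) has_integral J2) {-R..R}"
  shows "J1 \<le> 4 * R\<^sup>2 * J2"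
proof -
  \<comment> \<open>Integrate the derivative of \<open>s g(s)\<^sup>2\<close>, which vanishes at \<open>\<plusminus>R\<close>, and use
    \<open>-2 s g g' \<le> g\<^sup>2/2 + 2 R\<^sup>2 g'\<^sup>2\<close>.\<close>
  have "((\<lambda>s. (g s)\<^sup>2 + 2 * s * g s * g' s) has_integral (R * (g R)\<^sup>2 - (-R) * (g (-R))\<^sup>2)) {-R..R}"
  proof (rule fundamental_theorem_of_calculus_interior_strong[OF K])
    fix s assume "s \<in> {-R<..<R} - K"
    then have "((\<lambda>s. s * (g s)\<^sup>2) has_real_derivative (g s)\<^sup>2 + 2 * s * g s * g' s) (at s)"
      using der by (auto intro!: derivative_eq_intros simp: algebra_simps power2_eq_square)
    then show "((\<lambda>s. s * (g s)\<^sup>2) has_vector_derivative (g s)\<^sup>2 + 2 * s * g s * g' s) (at s)"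
      by (simp add: has_real_derivative_iff_has_vector_derivative)
  qed (use R cont in \<open>auto intro!: continuous_intros\<close>)
  with ends have "((\<lambda>s. (g s)\<^sup>2 + 2 * s * g s * g' s) has_integral 0) {-R..R}" by simp
  from has_integral_diff[OF h1 this]
  have "((\<lambda>s. - (2 * s * g s * g' s)) has_integral J1) {-R..R}" by simp
  moreover have "((\<lambda>s. (g s)\<^sup>2 / 2 + 2 * R\<^sup>2 * (g' s)\<^sup>2) has_integral (J1 / 2 + 2 * R\<^sup>2 * J2)) {-R..R}"
    by (intro has_integral_add has_integral_divide has_integral_mult_right h1 h2)
  moreover have "- (2 * s * g s * g' s) \<le> (g s)\<^sup>2 / 2 + 2 * R\<^sup>2 * (g' s)\<^sup>2" if "s \<in> {-R..R}" for s
  proof -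
    have "s\<^sup>2 * (g' s)\<^sup>2 \<le> R\<^sup>2 * (g' s)\<^sup>2"
      using that R by (intro mult_right_mono power2_le_iff_abs_le[THEN iffD2]) auto
    moreover have "0 \<le> (g s / 2 + s * g' s)\<^sup>2" by simp
    ultimately show ?thesis by (simp add: power2_eq_square algebra_simps)
  qed
  ultimately have "J1 \<le> J1 / 2 + 2 * R\<^sup>2 * J2" by (rule has_integral_le)
  then show ?thesis by simp
qed

lemma poincare_interval:
  fixes g g' :: "real \<Rightarrow> real" and R :: real
  assumes R: "R > 0" and cont: "continuous_on UNIV g"
    and zero: "\<And>s. \<bar>s\<bar> \<ge> R \<Longrightarrow> g s = 0"
    and K: "finite K" and der: "\<And>s. s \<notin> K \<Longrightarrow> (g has_real_derivative g' s) (at s)"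
    and meas: "g' \<in> borel_measurable borel"
  shows "(\<integral>\<^sup>+s. ennreal ((g s)\<^sup>2) \<partial>lborel) \<le> ennreal (4 * R\<^sup>2) * (\<integral>\<^sup>+s. ennreal ((g' s)\<^sup>2) \<partial>lborel)"
proof -
  define J' where "J' = (\<integral>\<^sup>+s. ennreal (indicator {-R..R} s * (g' s)\<^sup>2) \<partial>lborel)"
  have J'_le: "J' \<le> (\<integral>\<^sup>+s. ennreal ((g' s)\<^sup>2) \<partial>lborel)"
    unfolding J'_def by (rule nn_integral_mono) (auto simp: indicator_def)
  show ?thesis
  proof (cases "J' = \<infinity>")
    case True
    with J'_le R show ?thesis by (simp add: top_unique ennreal_mult_top)
  next
    case False
    have "(\<lambda>s. indicator {-R..R} s * (g' s)\<^sup>2) integrable_on UNIV"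
      by (rule nn_integral_integrable_on) (use meas False in \<open>auto simp: J'_def top.not_eq_extremum\<close>)
    moreover have "(\<lambda>s. indicator {-R..R} s * (g' s)\<^sup>2) = (\<lambda>s. if s \<in> {-R..R} then (g' s)\<^sup>2 else 0)"
      by (auto simp: indicator_def)
    ultimately have "(\<lambda>s. if s \<in> {-R..R} then (g' s)\<^sup>2 else 0) integrable_on UNIV"
      by (simp only:)
    then have "(\<lambda>s. (g' s)\<^sup>2) integrable_on {-R..R}"
      by (rule integrable_restrict_UNIV[THEN iffD1])
    then obtain J2 where h2: "((\<lambda>s. (g' s)\<^sup>2) has_integral J2) {-R..R}" by blast
    have "(\<lambda>s. (g s)\<^sup>2) integrable_on {-R..R}"
      by (intro integrable_continuous_interval continuous_intros continuous_on_subset[OF cont]) auto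
    then obtain J1 where h1: "((\<lambda>s. (g s)\<^sup>2) has_integral J1) {-R..R}" by blast
    have J: "J1 \<le> 4 * R\<^sup>2 * J2"
      using R zero der
      by (intro poincare_interval_has_integral[OF R continuous_on_subset[OF cont] _ _ K _ h1 h2]) auto
    have "(\<integral>\<^sup>+s. ennreal ((g s)\<^sup>2) \<partial>lborel) = (\<integral>\<^sup>+s. ennreal (indicator {-R..R} s * (g s)\<^sup>2) \<partial>lborel)"
    proof (intro nn_integral_cong)
      fix s
      have "g s = 0" if "s \<notin> {-R..R}" using that by (intro zero) auto
      then show "ennreal ((g s)\<^sup>2) = ennreal (indicator {-R..R} s * (g s)\<^sup>2)"
        by (auto simp: indicator_def)
    qed
    also have "\<dots> = ennreal J1"
      by (rule nn_integral_has_integral_lebesgue[OF _ h1]) simp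
    also have "\<dots> \<le> ennreal (4 * R\<^sup>2) * ennreal J2"
      using J by (simp add: ennreal_mult'[symmetric] ennreal_leI)
    also have "ennreal J2 = J'"
      unfolding J'_def by (rule nn_integral_has_integral_lebesgue[OF _ h2, symmetric]) simp
    finally show ?thesis using J'_le by (meson mult_left_mono order_trans zero_le)
  qed
qed

text \<open>Every such zero is isolated from the right, so a rational number chosen in each gap
  gives an injection into \<open>\<rat>\<close>.\<close>
lemma countable_simple_zeros:
  fixes g g' :: "real \<Rightarrow> real"
  assumes Z: "\<And>s. s \<in> Z \<Longrightarrow> g s = 0 \<and> g' s \<noteq> 0 \<and> (g has_real_derivative g' s) (at s)"
  shows "countable Z"
proof -
  have "\<exists>d>0. \<forall>h>0. h < d \<longrightarrow> g (s + h) \<noteq> 0" if "s \<in> Z" for s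
  proof -
    have gs: "g s = 0" and d: "(g has_real_derivative g' s) (at s)" and nz: "g' s \<noteq> 0"
      using Z[OF that] by auto
    show ?thesis
    proof (cases "g' s > 0")
      case True
      from DERIV_pos_inc_right[OF d True] gs show ?thesis by (metis less_irrefl)
    next
      case False
      with nz have "g' s < 0" by auto
      from DERIV_neg_dec_right[OF d this] gs show ?thesis by (metis less_irrefl)
    qed
  qed
  then obtain d where d: "\<And>s. s \<in> Z \<Longrightarrow> d s > 0 \<and> (\<forall>h>0. h < d s \<longrightarrow> g (s + h) \<noteq> 0)"
    by metis
  have "\<exists>q\<in>\<rat>. s < q \<and> q < s + d s" if "s \<in> Z" for s
    using Rats_dense_in_real[of s "s + d s"] d[OF that] by auto
  then obtain q where q: "\<And>s. s \<in> Z \<Longrightarrow> q s \<in> \<rat> \<and> s < q s \<and> q s < s + d s" by metis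
  have "strict_mono_on Z q"
  proof (rule strict_mono_onI)
    fix s1 s2 assume s: "s1 \<in> Z" "s2 \<in> Z" "s1 < s2"
    have "g (s1 + (s2 - s1)) = 0" using Z[OF s(2)] by simp
    then have "\<not> s2 - s1 < d s1" using d[OF s(1)] s(3) diff_gt_0_iff_gt by blast
    then show "q s1 < q s2" using q[OF s(1)] q[OF s(2)] by auto
  qed
  moreover have "countable (q ` Z)" using q by (intro countable_subset[OF _ countable_rat]) auto
  ultimately show ?thesis by (metis countable_image_inj_on strict_mono_on_imp_inj_on)
qed

lemma poincare_interval_support:
  fixes g g' :: "real \<Rightarrow> real" and R :: real and U :: "real set"
  assumes R: "R > 0" and cont: "continuous_on UNIV g"
    and zero: "\<And>s. s \<notin> U \<Longrightarrow> g s = 0" and U: "U \<subseteq> {-R<..<R}"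
    and K: "finite K" and der: "\<And>s. s \<notin> K \<Longrightarrow> (g has_real_derivative g' s) (at s)"
    and meas: "g' \<in> borel_measurable borel"
  shows "(\<integral>\<^sup>+s. ennreal ((g s)\<^sup>2) \<partial>lborel)
    \<le> ennreal (4 * R\<^sup>2) * (\<integral>\<^sup>+s. indicator U s * ennreal ((g' s)\<^sup>2) \<partial>lborel)"
proof -
  have "(\<integral>\<^sup>+s. ennreal ((g s)\<^sup>2) \<partial>lborel) \<le> ennreal (4 * R\<^sup>2) * (\<integral>\<^sup>+s. ennreal ((g' s)\<^sup>2) \<partial>lborel)"
  proof (intro poincare_interval[OF R cont _ K der meas] zero)
    fix s assume "\<bar>s\<bar> \<ge> R"
    then have "s \<notin> {-R<..<R}" by auto
    with U show "s \<notin> U" by blast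
  qed
  moreover have "countable {s. s \<notin> U \<and> s \<notin> K \<and> g' s \<noteq> 0}"
    using zero der by (intro countable_simple_zeros[of _ g g']) auto
  then have "countable ({s. s \<notin> U \<and> s \<notin> K \<and> g' s \<noteq> 0} \<union> K)"
    using K by (simp add: countable_finite)
  then have "AE s in lborel. s \<notin> {s. s \<notin> U \<and> s \<notin> K \<and> g' s \<noteq> 0} \<union> K"
    by (intro AE_not_in countable_imp_null_set_lborel)
  then have "(\<integral>\<^sup>+s. ennreal ((g' s)\<^sup>2) \<partial>lborel) = (\<integral>\<^sup>+s. indicator U s * ennreal ((g' s)\<^sup>2) \<partial>lborel)"
    by (rule nn_integral_cong_AE[OF AE_mp]) (auto simp: indicator_def)
  ultimately show ?thesis by simp
qed

lemma nn_integral_lborel_split_Basis: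
  fixes h :: "'a::euclidean_space \<Rightarrow> ennreal" and e :: 'a
  assumes h: "h \<in> borel_measurable borel" and e: "e \<in> Basis"
  shows "(\<integral>\<^sup>+x. h x \<partial>lborel)
    = (\<integral>\<^sup>+x'. (\<integral>\<^sup>+t. h ((\<Sum>b\<in>Basis - {e}. x' b *\<^sub>R b) + t *\<^sub>R e) \<partial>lborel) \<partial>(\<Pi>\<^sub>M b\<in>Basis - {e}. lborel))"
proof -
  interpret P: product_sigma_finite "\<lambda>_::'a. (lborel::real measure)"
    by (simp add: product_sigma_finite_def lborel.sigma_finite_measure_axioms)
  have coords: "(\<lambda>f. \<Sum>b\<in>Basis. f b *\<^sub>R b) \<in> borel_measurable (\<Pi>\<^sub>M b\<in>(Basis::'a set). lborel)"
    by measurable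
  have "(\<integral>\<^sup>+x. h x \<partial>lborel) = (\<integral>\<^sup>+x. h x \<partial>distr (\<Pi>\<^sub>M b\<in>Basis. lborel) borel (\<lambda>f. \<Sum>b\<in>Basis. f b *\<^sub>R b))"
    by (simp only: lborel_eq[where 'a='a, symmetric])
  also have "\<dots> = (\<integral>\<^sup>+f. h (\<Sum>b\<in>Basis. f b *\<^sub>R b) \<partial>(\<Pi>\<^sub>M b\<in>Basis. lborel))"
    by (rule nn_integral_distr[OF coords]) (use h in simp)
  also have "Basis = insert e (Basis - {e})" using e by auto
  also have "(\<integral>\<^sup>+f. h (\<Sum>b\<in>insert e (Basis - {e}). f b *\<^sub>R b) \<partial>(\<Pi>\<^sub>M b\<in>insert e (Basis - {e}). lborel))
      = (\<integral>\<^sup>+x. (\<integral>\<^sup>+y. h (\<Sum>b\<in>insert e (Basis - {e}). (x(e := y)) b *\<^sub>R b) \<partial>lborel) \<partial>(\<Pi>\<^sub>M b\<in>Basis - {e}. lborel))"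
    by (rule P.product_nn_integral_insert)
      (use measurable_compose[OF coords h] e in \<open>auto simp: insert_absorb o_def\<close>)
  also have "\<dots> = (\<integral>\<^sup>+x'. (\<integral>\<^sup>+t. h ((\<Sum>b\<in>Basis - {e}. x' b *\<^sub>R b) + t *\<^sub>R e) \<partial>lborel) \<partial>(\<Pi>\<^sub>M b\<in>Basis - {e}. lborel))"
  proof (intro nn_integral_cong arg_cong[where f=h])
    fix x :: "'a \<Rightarrow> real" and y :: real
    have "(\<Sum>b\<in>Basis - {e}. (x(e := y)) b *\<^sub>R b) = (\<Sum>b\<in>Basis - {e}. x b *\<^sub>R b)"
      by (rule sum.cong) auto
    then show "(\<Sum>b\<in>insert e (Basis - {e}). (x(e := y)) b *\<^sub>R b) = (\<Sum>b\<in>Basis - {e}. x b *\<^sub>R b) + y *\<^sub>R e"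
      by (subst sum.insert) (auto simp: add.commute)
  qed
  finally show ?thesis .
qed

lemma set_integrable_continuous_bounded:
  fixes \<phi> :: "'a::euclidean_space \<Rightarrow> real"
  assumes "continuous_on UNIV \<phi>" "bounded \<Omega>" "\<Omega> \<in> sets lebesgue"
  shows "set_integrable lebesgue \<Omega> \<phi>"
proof -
  obtain a where a: "\<Omega> \<subseteq> cbox (-a) a" by (rule bounded_subset_cbox_symmetric[OF assms(2)])
  have "\<phi> absolutely_integrable_on cbox (-a) a"
    by (rule absolutely_integrable_continuous, rule continuous_on_subset[OF assms(1)]) simp
  from set_integrable_subset[OF this assms(3) a] show ?thesis .
qed

lemma ennreal_set_integral_eq_nn_integral:
  fixes f :: "'a::euclidean_space \<Rightarrow> real"
  assumes "set_integrable lebesgue \<Omega> f" "\<And>x. 0 \<le> f x"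
  shows "ennreal (LINT x:\<Omega>|lebesgue. f x) = (\<integral>\<^sup>+x. indicator \<Omega> x * ennreal (f x) \<partial>lebesgue)"
proof -
  have "ennreal (LINT x:\<Omega>|lebesgue. f x) = (\<integral>\<^sup>+x. ennreal (indicator \<Omega> x *\<^sub>R f x) \<partial>lebesgue)"
    unfolding set_lebesgue_integral_def
    by (rule nn_integral_eq_integral[symmetric]) (use assms in \<open>auto simp: set_integrable_def\<close>)
  also have "\<dots> = (\<integral>\<^sup>+x. indicator \<Omega> x * ennreal (f x) \<partial>lebesgue)"
    by (intro nn_integral_cong) (simp add: indicator_def)
  finally show ?thesis .
qed

lemma measure_lebesgue_open_pos:
  fixes \<Omega> :: "'a::euclidean_space set"
  assumes "open \<Omega>" "bounded \<Omega>" "\<Omega> \<noteq> {}"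
  shows "measure lebesgue \<Omega> > 0"
proof -
  have "\<Omega> \<in> lmeasurable" using assms by (intro lmeasurable_open)
  moreover have "\<not> negligible \<Omega>" using assms by (intro open_not_negligible)
  ultimately show ?thesis using negligible_iff_measure0 measure_nonneg by (metis less_eq_real_def)
qed

section \<open>Polynomials and partial derivatives along lines\<close>

text \<open>\<open>mpoly_fun c r\<close> is the polynomial of \<^const>\<open>poly_on\<close> with coefficients \<open>c\<close>, and
  \<open>mpoly_deriv c r x y\<close> its derivative at \<open>x\<close> in direction \<open>y\<close>; the truncated exponent
  \<open>\<alpha> i - 1\<close> is harmless because that term carries the factor \<open>\<alpha> i\<close>.\<close>
definition mpoly_fun :: "(('d::finite \<Rightarrow> nat) \<Rightarrow> real) \<Rightarrow> nat \<Rightarrow> real^'d \<Rightarrow> real" where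
  "mpoly_fun c r x = (\<Sum>\<alpha>\<in>{\<alpha>::'d \<Rightarrow> nat. sum \<alpha> UNIV \<le> r}. c \<alpha> * (\<Prod>i\<in>UNIV. (x $ i) ^ (\<alpha> i)))"

definition mpoly_deriv :: "(('d::finite \<Rightarrow> nat) \<Rightarrow> real) \<Rightarrow> nat \<Rightarrow> real^'d \<Rightarrow> real^'d \<Rightarrow> real" where
  "mpoly_deriv c r x y = (\<Sum>\<alpha>\<in>{\<alpha>::'d \<Rightarrow> nat. sum \<alpha> UNIV \<le> r}. c \<alpha> *
      (\<Sum>i\<in>UNIV. of_nat (\<alpha> i) * y $ i * (x $ i) ^ (\<alpha> i - 1) * (\<Prod>j\<in>UNIV - {i}. (x $ j) ^ (\<alpha> j))))"

lemma has_derivative_mpoly_fun: "(mpoly_fun c r has_derivative mpoly_deriv c r x) (at x within S)"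
proof -
  have coord: "((\<lambda>x. x $ i) has_derivative (\<lambda>y. y $ i)) (at x within S)" for i
    by (rule bounded_linear_imp_has_derivative) (rule bounded_linear_vec_nth)
  show ?thesis
    unfolding mpoly_fun_def[abs_def] mpoly_deriv_def
    by (intro has_derivative_sum has_derivative_mult_right has_derivative_prod has_derivative_power coord)
qed

lemma continuous_on_mpoly_deriv: "continuous_on A (\<lambda>x. mpoly_deriv c r x y)"
  unfolding mpoly_deriv_def by (intro continuous_intros)

lemma has_real_derivative_mpoly_fun_line:
  "((\<lambda>t. mpoly_fun c r (x0 + t *\<^sub>R e)) has_real_derivative mpoly_deriv c r (x0 + t *\<^sub>R e) e) (at t)"
proof -
  have "((\<lambda>t. x0 + t *\<^sub>R e) has_derivative (\<lambda>h. h *\<^sub>R e)) (at t)"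
    by (intro derivative_eq_intros) auto
  from has_derivative_compose[OF this has_derivative_mpoly_fun]
  have "((\<lambda>t. mpoly_fun c r (x0 + t *\<^sub>R e)) has_derivative (\<lambda>h. mpoly_deriv c r (x0 + t *\<^sub>R e) (h *\<^sub>R e))) (at t)"
    by (simp add: o_def)
  moreover have "(\<lambda>h. mpoly_deriv c r (x0 + t *\<^sub>R e) (h *\<^sub>R e)) = (*) (mpoly_deriv c r (x0 + t *\<^sub>R e) e)"
    by (simp add: fun_eq_iff mpoly_deriv_def sum_distrib_left algebra_simps)
  ultimately show ?thesis by (simp add: has_field_derivative_def)
qed

text \<open>\<^const>\<open>pd\<close> is defined through \<^const>\<open>deriv\<close>, i.e.\ by a choice, and need not be measurable.
  Its sequential version below is a pointwise limit of continuous functions, hence Borel, and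
  agrees with \<^const>\<open>pd\<close> wherever the partial derivative exists.\<close>
definition pd_seq :: "(real^'d::finite \<Rightarrow> real) \<Rightarrow> 'd \<Rightarrow> real^'d \<Rightarrow> real" where
  "pd_seq u j x = lim (\<lambda>m. real (Suc m) * (u (x + inverse (real (Suc m)) *\<^sub>R axis j 1) - u x))"

lemma pd_seq_eq_pd:
  assumes "((\<lambda>t. u (x + t *\<^sub>R axis j 1)) has_real_derivative D) (at 0)"
  shows "pd_seq u j x = D" "pd u j x = D"
proof -
  show "pd u j x = D" unfolding pd_def using assms by (rule DERIV_imp_deriv)
  have "((\<lambda>h. (u (x + h *\<^sub>R axis j 1) - u (x + 0 *\<^sub>R axis j 1)) / (h - 0)) \<longlongrightarrow> D) (at 0)"
    using assms unfolding has_field_derivative_iff by simp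
  moreover have "filterlim (\<lambda>m. inverse (real (Suc m))) (at 0) sequentially"
    unfolding filterlim_at using LIMSEQ_inverse_real_of_nat by auto
  ultimately have "(\<lambda>m. (u (x + inverse (real (Suc m)) *\<^sub>R axis j 1) - u (x + 0 *\<^sub>R axis j 1))
      / (inverse (real (Suc m)) - 0)) \<longlonglongrightarrow> D"
    by (rule filterlim_compose)
  then have "(\<lambda>m. real (Suc m) * (u (x + inverse (real (Suc m)) *\<^sub>R axis j 1) - u x)) \<longlonglongrightarrow> D"
    by (simp add: divide_inverse mult.commute)
  then show "pd_seq u j x = D" unfolding pd_seq_def by (rule limI)
qed

lemma borel_measurable_pd_seq:
  assumes "continuous_on UNIV u"
  shows "pd_seq u j \<in> borel_measurable borel"
  unfolding pd_seq_def
proof (rule borel_measurable_lim_metric)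
  fix m
  have "continuous_on UNIV (\<lambda>x. real (Suc m) * (u (x + inverse (real (Suc m)) *\<^sub>R axis j 1) - u x))"
    by (intro continuous_intros continuous_on_compose2[OF assms]) auto
  then show "(\<lambda>x. real (Suc m) * (u (x + inverse (real (Suc m)) *\<^sub>R axis j 1) - u x)) \<in> borel_measurable borel"
    by (rule borel_measurable_continuous_onI)
qed

lemma has_real_derivative_line_transform_open:
  fixes u :: "'a::real_normed_vector \<Rightarrow> real"
  assumes "open V" "x0 + t *\<^sub>R e \<in> V" "\<And>y. y \<in> V \<Longrightarrow> u y = w y"
    and "((\<lambda>s. w (x0 + s *\<^sub>R e)) has_real_derivative D) (at t)"
  shows "((\<lambda>s. u (x0 + s *\<^sub>R e)) has_real_derivative D) (at t)"
proof (rule has_field_derivative_transform_within_open[OF assms(4)])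
  show "open {s. x0 + s *\<^sub>R e \<in> V}"
    by (rule open_vimage[OF assms(1), unfolded vimage_def]) (intro continuous_intros)
qed (use assms(2,3) in auto)

lemma line_section_interval:
  fixes C :: "'a::real_inner set"
  assumes "compact C" "convex C" "e \<noteq> 0"
  shows "\<exists>a b. {t. x0 + t *\<^sub>R e \<in> C} = {a..b}"
proof -
  let ?I = "{t. x0 + t *\<^sub>R e \<in> C}"
  have "?I \<subseteq> (\<lambda>y. ((y - x0) \<bullet> e) / (e \<bullet> e)) ` C"
  proof
    fix t assume "t \<in> ?I"
    moreover have "t = ((x0 + t *\<^sub>R e - x0) \<bullet> e) / (e \<bullet> e)" using assms(3) by simp
    ultimately show "t \<in> (\<lambda>y. ((y - x0) \<bullet> e) / (e \<bullet> e)) ` C" by blast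
  qed
  moreover have "compact ((\<lambda>y. ((y - x0) \<bullet> e) / (e \<bullet> e)) ` C)"
    using assms(3) by (intro compact_continuous_image continuous_intros assms(1)) simp
  ultimately have "bounded ?I" by (meson bounded_subset compact_imp_bounded)
  moreover have "closed ?I"
    using continuous_closed_vimage[OF compact_imp_closed[OF assms(1)], of "\<lambda>t. x0 + t *\<^sub>R e"]
    by (simp add: vimage_def continuous_intros)
  moreover have "convex ?I"
  proof (rule convexI)
    fix s t u v :: real assume "s \<in> ?I" "t \<in> ?I" "0 \<le> u" "0 \<le> v" "u + v = 1"
    then have "u *\<^sub>R (x0 + s *\<^sub>R e) + v *\<^sub>R (x0 + t *\<^sub>R e) \<in> C" using assms(2) by (simp add: convexD)
    moreover have "u *\<^sub>R (x0 + s *\<^sub>R e) + v *\<^sub>R (x0 + t *\<^sub>R e) = x0 + (u * s + v * t) *\<^sub>R e"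
      using \<open>u + v = 1\<close> by (simp add: algebra_simps flip: scaleR_add_left)
    ultimately show "u *\<^sub>R s + v *\<^sub>R t \<in> ?I" by simp
  qed
  ultimately show ?thesis
    by (meson bounded_closed_imp_seq_compact compact_eq_seq_compact_metric connected_compact_interval_1
        convex_connected)
qed

lemma Wh_continuous: "v \<in> Wh \<Omega> T r \<Longrightarrow> continuous_on UNIV v"
  unfolding Wh_def by auto

lemma Wh_component_continuous: "v \<in> Wh \<Omega> T r \<Longrightarrow> continuous_on UNIV (\<lambda>x. v x $ i)"
  by (rule bounded_linear.continuous_on[OF bounded_linear_vec_nth Wh_continuous])

lemma Wh_vanishes: "v \<in> Wh \<Omega> T r \<Longrightarrow> x \<notin> \<Omega> \<Longrightarrow> v x = 0"
  unfolding Wh_def by auto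

lemma Wh_component_mpoly:
  "v \<in> Wh \<Omega> T r \<Longrightarrow> S \<in> T \<Longrightarrow> \<exists>c. \<forall>x\<in>convex hull S. v x $ i = mpoly_fun c r x"
  unfolding Wh_def poly_on_def mpoly_fun_def by auto

lemma triangulation_cover:
  assumes "triangulation \<Omega> T" "x \<in> closure \<Omega>"
  obtains S where "S \<in> T" "x \<in> convex hull S"
  using assms unfolding triangulation_def by blast

lemma triangulation_compact: "triangulation \<Omega> T \<Longrightarrow> S \<in> T \<Longrightarrow> compact (convex hull S)"
  unfolding triangulation_def by (auto intro: compact_convex_hull finite_imp_compact)

lemma null_sets_triangulation_frontiers:
  assumes "triangulation \<Omega> T"
  shows "(\<Union>S\<in>T. frontier (convex hull S)) \<in> null_sets lebesgue"
proof -
  have "finite T" using assms by (simp add: triangulation_def)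
  then have "negligible (\<Union>S\<in>T. frontier (convex hull S))"
    by (intro negligible_Union) (auto intro: negligible_convex_frontier)
  then show ?thesis by (simp add: negligible_iff_null_sets)
qed

lemma Wh_line_deriv_exterior:
  assumes "v \<in> Wh \<Omega> T r" "x0 + t *\<^sub>R e \<notin> closure \<Omega>"
  shows "((\<lambda>s. v (x0 + s *\<^sub>R e) $ i) has_real_derivative 0) (at t)"
proof (rule has_real_derivative_line_transform_open[where V="- closure \<Omega>" and w="\<lambda>_. 0"])
  show "v y $ i = 0" if "y \<in> - closure \<Omega>" for y
  proof -
    have "y \<notin> \<Omega>" using that closure_subset by blast
    then show ?thesis by (simp add: Wh_vanishes[OF assms(1)])
  qed
qed (use assms(2) in auto)

lemma Wh_line_deriv_interior:
  assumes "\<forall>y\<in>convex hull S. v y $ i = mpoly_fun c r y" "x \<in> interior (convex hull S)"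
  shows "((\<lambda>s. v (x + s *\<^sub>R e) $ i) has_real_derivative mpoly_deriv c r x e) (at 0)"
proof (rule has_real_derivative_line_transform_open[where V="interior (convex hull S)"])
  show "((\<lambda>s. mpoly_fun c r (x + s *\<^sub>R e)) has_real_derivative mpoly_deriv c r x e) (at 0)"
    using has_real_derivative_mpoly_fun_line[of c r x e 0] by simp
qed (use assms interior_subset in auto)

text \<open>On a line, a function of \<^const>\<open>Wh\<close> is piecewise polynomial; it can fail to be differentiable
  only where the line enters or leaves one of the finitely many simplices.\<close>
lemma Wh_line_differentiable:
  assumes tri: "triangulation \<Omega> T" and v: "v \<in> Wh \<Omega> T r" and e: "e \<noteq> 0"
  shows "\<exists>K. finite K \<and> (\<forall>t. t \<notin> K \<longrightarrow> (\<exists>D. ((\<lambda>s. v (x0 + s *\<^sub>R e) $ i) has_real_derivative D) (at t)))"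
proof -
  define I where "I S = {t. x0 + t *\<^sub>R e \<in> convex hull S}" for S
  define K where "K = (\<Union>S\<in>T. {Inf (I S), Sup (I S)})"
  have "finite K" using tri unfolding K_def triangulation_def by auto
  moreover have "\<exists>D. ((\<lambda>s. v (x0 + s *\<^sub>R e) $ i) has_real_derivative D) (at t)" if "t \<notin> K" for t
  proof (cases "x0 + t *\<^sub>R e \<in> closure \<Omega>")
    case False
    with Wh_line_deriv_exterior[OF v] show ?thesis by blast
  next
    case True
    then obtain S where S: "S \<in> T" "t \<in> I S" using triangulation_cover[OF tri] by (auto simp: I_def)
    obtain c where c: "\<forall>x\<in>convex hull S. v x $ i = mpoly_fun c r x"
      using Wh_component_mpoly[OF v S(1)] by blast
    obtain a b where ab: "I S = {a..b}"
      using line_section_interval[OF triangulation_compact[OF tri S(1)] convex_convex_hull e, of x0]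
      unfolding I_def by blast
    with S(2) have "Inf (I S) = a" "Sup (I S) = b" by auto
    with \<open>t \<notin> K\<close> S ab have t: "t \<in> {a<..<b}" by (auto simp: K_def)
    have "((\<lambda>s. v (x0 + s *\<^sub>R e) $ i) has_real_derivative mpoly_deriv c r (x0 + t *\<^sub>R e) e) (at t)"
    proof (rule has_field_derivative_transform_within_open[OF has_real_derivative_mpoly_fun_line _ t])
      fix s assume "s \<in> {a<..<b}"
      then have "s \<in> I S" by (simp add: ab)
      then show "mpoly_fun c r (x0 + s *\<^sub>R e) = v (x0 + s *\<^sub>R e) $ i" using c by (simp add: I_def)
    qed simp
    then show ?thesis by blast
  qed
  ultimately show ?thesis by blast
qed

lemma Wh_partial_derivative_exists:
  assumes tri: "triangulation \<Omega> T" and v: "v \<in> Wh \<Omega> T r"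
    and x: "x \<notin> (\<Union>S\<in>T. frontier (convex hull S))"
  shows "\<exists>D. ((\<lambda>s. v (x + s *\<^sub>R e) $ i) has_real_derivative D) (at 0)"
proof (cases "x \<in> closure \<Omega>")
  case False
  then have "((\<lambda>s. v (x + s *\<^sub>R e) $ i) has_real_derivative 0) (at 0)"
    by (intro Wh_line_deriv_exterior[OF v]) simp
  then show ?thesis by blast
next
  case True
  then obtain S where S: "S \<in> T" "x \<in> convex hull S" using triangulation_cover[OF tri] by blast
  then have "x \<in> interior (convex hull S)"
    using x compact_imp_closed[OF triangulation_compact[OF tri S(1)]] by (auto simp: frontier_def)
  moreover obtain c where "\<forall>y\<in>convex hull S. v y $ i = mpoly_fun c r y"
    using Wh_component_mpoly[OF v S(1)] by blast
  ultimately show ?thesis using Wh_line_deriv_interior by blast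
qed

lemma gradsq_nonneg: "0 \<le> gradsq v x"
  unfolding gradsq_def by (intro sum_nonneg) auto

lemma gradip_self: "gradip \<Omega> v v = (LINT x:\<Omega>|lebesgue. gradsq v x)"
  by (simp add: gradip_def gradsq_def power2_eq_square)

lemma gradip_self_nonneg: "0 \<le> gradip \<Omega> v v"
  unfolding gradip_self set_lebesgue_integral_def
  by (intro integral_nonneg_AE AE_I2) (simp add: gradsq_nonneg)

definition gradsq_seq :: "(real^'d::finite \<Rightarrow> real^'d) \<Rightarrow> real^'d \<Rightarrow> real" where
  "gradsq_seq v x = (\<Sum>i\<in>UNIV. \<Sum>j\<in>UNIV. (pd_seq (\<lambda>y. v y $ i) j x)\<^sup>2)"

lemma borel_measurable_gradsq_seq:
  assumes "continuous_on UNIV v"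
  shows "gradsq_seq v \<in> borel_measurable borel"
  unfolding gradsq_seq_def
  by (intro borel_measurable_sum borel_measurable_power borel_measurable_pd_seq)
    (rule bounded_linear.continuous_on[OF bounded_linear_vec_nth assms])

lemma AE_gradsq_seq_eq_gradsq:
  assumes tri: "triangulation \<Omega> T" and v: "v \<in> Wh \<Omega> T r"
  shows "AE x in lebesgue. gradsq_seq v x = gradsq v x"
proof (rule AE_I'[OF null_sets_triangulation_frontiers[OF tri]], rule subsetI, rule ccontr)
  fix x assume x: "x \<notin> (\<Union>S\<in>T. frontier (convex hull S))"
  have "pd_seq (\<lambda>y. v y $ i) j x = pd (\<lambda>y. v y $ i) j x" for i j
  proof -
    obtain D where "((\<lambda>s. v (x + s *\<^sub>R axis j 1) $ i) has_real_derivative D) (at 0)"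
      using Wh_partial_derivative_exists[OF tri v x] by blast
    from pd_seq_eq_pd[of "\<lambda>y. v y $ i", OF this] show ?thesis by simp
  qed
  moreover assume "x \<in> {x \<in> space lebesgue. gradsq_seq v x \<noteq> gradsq v x}"
  ultimately show False by (simp add: gradsq_seq_def gradsq_def)
qed

lemma Wh_gradsq_seq_bounded:
  fixes v :: "real^'d::finite \<Rightarrow> real^'d"
  assumes tri: "triangulation \<Omega> T" and v: "v \<in> Wh \<Omega> T r"
  shows "\<exists>B. \<forall>x\<in>\<Omega> - (\<Union>S\<in>T. frontier (convex hull S)). gradsq_seq v x \<le> B"
proof -
  obtain c where c: "\<And>S i x. S \<in> T \<Longrightarrow> x \<in> convex hull S \<Longrightarrow> v x $ i = mpoly_fun (c S i) r x"
    using Wh_component_mpoly[OF v] by metis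
  define P where "P = (\<Union>(S, i, j)\<in>T \<times> UNIV \<times> UNIV. (\<lambda>x. mpoly_deriv (c S i) r x (axis j 1)) ` (convex hull S))"
  have "finite T" using tri by (simp add: triangulation_def)
  then have "compact P" unfolding P_def
    by (intro compact_UN) (auto intro: compact_continuous_image continuous_on_mpoly_deriv triangulation_compact[OF tri])
  then obtain M where M: "\<And>y. y \<in> P \<Longrightarrow> \<bar>y\<bar> \<le> M" using compact_imp_bounded bounded_real by metis
  have bnd: "gradsq_seq v x \<le> real CARD('d) * (real CARD('d) * M\<^sup>2)"
    if x: "x \<in> \<Omega> - (\<Union>S\<in>T. frontier (convex hull S))" for x
  proof -
    have "x \<in> closure \<Omega>" using x closure_subset by auto
    then obtain S where S: "S \<in> T" "x \<in> convex hull S" by (rule triangulation_cover[OF tri])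
    then have xi: "x \<in> interior (convex hull S)"
      using x compact_imp_closed[OF triangulation_compact[OF tri S(1)]] by (auto simp: frontier_def)
    have sq: "(pd_seq (\<lambda>y. v y $ i) j x)\<^sup>2 \<le> M\<^sup>2" for i j
    proof -
      have "pd_seq (\<lambda>y. v y $ i) j x = mpoly_deriv (c S i) r x (axis j 1)"
      proof (rule pd_seq_eq_pd(1))
        show "((\<lambda>t. v (x + t *\<^sub>R axis j 1) $ i) has_real_derivative mpoly_deriv (c S i) r x (axis j 1)) (at 0)"
          using c S by (intro Wh_line_deriv_interior[OF _ xi]) auto
      qed
      moreover have "mpoly_deriv (c S i) r x (axis j 1) \<in> P"
        unfolding P_def using S by (intro UN_I[of "(S, i, j)"]) auto
      ultimately have "\<bar>pd_seq (\<lambda>y. v y $ i) j x\<bar> \<le> M" using M by simp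
      then show ?thesis by (meson abs_ge_zero order_trans power2_le_iff_abs_le)
    qed
    have "gradsq_seq v x \<le> (\<Sum>i\<in>(UNIV::'d set). \<Sum>j\<in>(UNIV::'d set). M\<^sup>2)"
      unfolding gradsq_seq_def by (intro sum_mono sq)
    then show ?thesis by (simp only: sum_constant)
  qed
  show ?thesis by (rule exI, rule ballI, rule bnd)
qed

text \<open>\<^const>\<open>gradip\<close> is a Bochner integral, which is \<open>0\<close> for non-integrable integrands, so
  integrability is needed to identify \<open>gradip \<Omega> v v\<close> with the nonnegative integral of \<open>|\<nabla>v|\<^sup>2\<close>.\<close>
lemma set_integrable_gradsq_Wh:
  assumes tri: "triangulation \<Omega> T" and v: "v \<in> Wh \<Omega> T r" and \<Omega>: "\<Omega> \<in> lmeasurable"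
  shows "set_integrable lebesgue \<Omega> (gradsq v)"
proof -
  obtain B where B: "\<And>x. x \<in> \<Omega> - (\<Union>S\<in>T. frontier (convex hull S)) \<Longrightarrow> gradsq_seq v x \<le> B"
    using Wh_gradsq_seq_bounded[OF tri v] by blast
  have meas: "set_borel_measurable lebesgue \<Omega> (gradsq_seq v)"
    using borel_measurable_gradsq_seq[OF Wh_continuous[OF v]] \<Omega>
    unfolding set_borel_measurable_def by (measurable, auto intro: measurable_completion)
  have "AE x in lebesgue. x \<in> \<Omega> \<longrightarrow> norm (gradsq_seq v x) \<le> norm B"
    using AE_not_in[OF null_sets_triangulation_frontiers[OF tri]]
  proof eventually_elim
    case (elim x)
    have "0 \<le> gradsq_seq v x" unfolding gradsq_seq_def by (intro sum_nonneg) auto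
    moreover have "x \<in> \<Omega> \<Longrightarrow> gradsq_seq v x \<le> B" using elim by (intro B) simp
    ultimately show ?case by auto
  qed
  with absolutely_integrable_on_const[OF \<Omega>] meas
  have "integrable lebesgue (\<lambda>x. indicator \<Omega> x *\<^sub>R gradsq_seq v x)"
    unfolding set_integrable_def[symmetric] by (rule set_integrable_bound)
  moreover have ae: "AE x in lebesgue. indicator \<Omega> x *\<^sub>R gradsq_seq v x = indicator \<Omega> x *\<^sub>R gradsq v x"
    using AE_gradsq_seq_eq_gradsq[OF tri v] by eventually_elim simp
  moreover from meas ae have "(\<lambda>x. indicator \<Omega> x *\<^sub>R gradsq v x) \<in> borel_measurable lebesgue"
    unfolding set_borel_measurable_def by (rule borel_measurable_AE)
  ultimately show ?thesis unfolding set_integrable_def by (metis integrable_cong_AE_imp)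
qed

section \<open>Friedrichs inequality on the finite element space\<close>

lemma poincare_line:
  fixes u :: "real^'d::finite \<Rightarrow> real"
  assumes R: "R > 0" and \<Omega>: "open \<Omega>" "\<Omega> \<subseteq> ball 0 R"
    and cont: "continuous_on UNIV u" and zero: "\<And>x. x \<notin> \<Omega> \<Longrightarrow> u x = 0"
    and line: "\<exists>K. finite K \<and> (\<forall>t. t \<notin> K \<longrightarrow> (\<exists>D. ((\<lambda>s. u (x0 + s *\<^sub>R axis j 1)) has_real_derivative D) (at t)))"
    and x0: "x0 \<bullet> axis j 1 = 0"
  shows "(\<integral>\<^sup>+t. ennreal ((u (x0 + t *\<^sub>R axis j 1))\<^sup>2) \<partial>lborel)
    \<le> ennreal (4 * R\<^sup>2) * (\<integral>\<^sup>+t. indicator \<Omega> (x0 + t *\<^sub>R axis j 1) * ennreal ((pd_seq u j (x0 + t *\<^sub>R axis j 1))\<^sup>2) \<partial>lborel)"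
proof -
  define e :: "real^'d" where "e = axis j 1"
  define U where "U = {t. x0 + t *\<^sub>R e \<in> \<Omega>}"
  obtain K where K: "finite K" "\<And>t. t \<notin> K \<Longrightarrow> \<exists>D. ((\<lambda>s. u (x0 + s *\<^sub>R e)) has_real_derivative D) (at t)"
    using line unfolding e_def by blast
  have "(\<integral>\<^sup>+t. ennreal ((u (x0 + t *\<^sub>R e))\<^sup>2) \<partial>lborel)
      \<le> ennreal (4 * R\<^sup>2) * (\<integral>\<^sup>+t. indicator U t * ennreal ((pd_seq u j (x0 + t *\<^sub>R e))\<^sup>2) \<partial>lborel)"
  proof (rule poincare_interval_support[OF R _ _ _ K(1)])
    show "continuous_on UNIV (\<lambda>t. u (x0 + t *\<^sub>R e))"
      by (intro continuous_on_compose2[OF cont] continuous_intros) auto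
    show "u (x0 + s *\<^sub>R e) = 0" if "s \<notin> U" for s using that zero by (simp add: U_def)
    show "U \<subseteq> {-R<..<R}"
    proof
      fix t assume "t \<in> U"
      then have "norm (x0 + t *\<^sub>R e) < R" using \<Omega>(2) by (auto simp: U_def)
      moreover have "\<bar>(x0 + t *\<^sub>R e) \<bullet> e\<bar> \<le> norm (x0 + t *\<^sub>R e)"
        by (rule Basis_le_norm) (simp add: e_def)
      moreover have "(x0 + t *\<^sub>R e) \<bullet> e = t" using x0 by (simp add: e_def inner_add_left)
      ultimately show "t \<in> {-R<..<R}" by (auto simp: abs_less_iff)
    qed
    show "((\<lambda>t. u (x0 + t *\<^sub>R e)) has_real_derivative pd_seq u j (x0 + t *\<^sub>R e)) (at t)"
      if t: "t \<notin> K" for t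
    proof -
      obtain D where D: "((\<lambda>s. u (x0 + s *\<^sub>R e)) has_real_derivative D) (at t)" using K(2)[OF t] by blast
      then have "((\<lambda>s. u ((x0 + t *\<^sub>R e) + s *\<^sub>R axis j 1)) has_real_derivative D) (at 0)"
        using DERIV_shift[of "\<lambda>s. u (x0 + s *\<^sub>R e)" D 0 t] by (simp add: e_def algebra_simps)
      with D show ?thesis by (simp add: pd_seq_eq_pd(1))
    qed
    show "(\<lambda>t. pd_seq u j (x0 + t *\<^sub>R e)) \<in> borel_measurable borel"
      by (intro measurable_compose[OF _ borel_measurable_pd_seq[OF cont]] borel_measurable_continuous_onI
          continuous_intros)
  qed
  also have "(\<integral>\<^sup>+t. indicator U t * ennreal ((pd_seq u j (x0 + t *\<^sub>R e))\<^sup>2) \<partial>lborel)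
      = (\<integral>\<^sup>+t. indicator \<Omega> (x0 + t *\<^sub>R e) * ennreal ((pd_seq u j (x0 + t *\<^sub>R e))\<^sup>2) \<partial>lborel)"
    by (rule nn_integral_cong) (simp add: U_def indicator_def)
  finally show ?thesis unfolding e_def .
qed

lemma poincare_direction:
  fixes u :: "real^'d::finite \<Rightarrow> real"
  assumes R: "R > 0" and \<Omega>: "open \<Omega>" "\<Omega> \<subseteq> ball 0 R"
    and cont: "continuous_on UNIV u" and zero: "\<And>x. x \<notin> \<Omega> \<Longrightarrow> u x = 0"
    and line: "\<And>x0. \<exists>K. finite K \<and> (\<forall>t. t \<notin> K \<longrightarrow> (\<exists>D. ((\<lambda>s. u (x0 + s *\<^sub>R axis j 1)) has_real_derivative D) (at t)))"
  shows "(\<integral>\<^sup>+x. ennreal ((u x)\<^sup>2) \<partial>lborel)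
    \<le> ennreal (4 * R\<^sup>2) * (\<integral>\<^sup>+x. indicator \<Omega> x * ennreal ((pd_seq u j x)\<^sup>2) \<partial>lborel)"
proof -
  define e :: "real^'d" where "e = axis j 1"
  define x' where "x' f = (\<Sum>b\<in>Basis - {e}. f b *\<^sub>R b)" for f
  have e: "e \<in> Basis" by (simp add: e_def)
  have [measurable]: "\<Omega> \<in> sets borel" "pd_seq u j \<in> borel_measurable borel"
    using \<Omega>(1) borel_measurable_pd_seq[OF cont] by auto
  have meas: "(\<lambda>x. indicator \<Omega> x * ennreal ((pd_seq u j x)\<^sup>2)) \<in> borel_measurable borel"
    by measurable
  have slices: "(\<integral>\<^sup>+t. ennreal ((u (x' f + t *\<^sub>R e))\<^sup>2) \<partial>lborel)
      \<le> (\<integral>\<^sup>+t. ennreal (4 * R\<^sup>2) * (indicator \<Omega> (x' f + t *\<^sub>R e) * ennreal ((pd_seq u j (x' f + t *\<^sub>R e))\<^sup>2)) \<partial>lborel)"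
    for f
  proof -
    have "x' f \<bullet> e = 0"
      using e by (simp add: x'_def inner_sum_left inner_Basis)
    then have "(\<integral>\<^sup>+t. ennreal ((u (x' f + t *\<^sub>R e))\<^sup>2) \<partial>lborel)
        \<le> ennreal (4 * R\<^sup>2) * (\<integral>\<^sup>+t. indicator \<Omega> (x' f + t *\<^sub>R e) * ennreal ((pd_seq u j (x' f + t *\<^sub>R e))\<^sup>2) \<partial>lborel)"
      unfolding e_def by (intro poincare_line[OF R \<Omega> cont zero line])
    also have "\<dots> = (\<integral>\<^sup>+t. ennreal (4 * R\<^sup>2) * (indicator \<Omega> (x' f + t *\<^sub>R e) * ennreal ((pd_seq u j (x' f + t *\<^sub>R e))\<^sup>2)) \<partial>lborel)"
      by (intro nn_integral_cmult[symmetric]) measurable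
    finally show ?thesis .
  qed
  have "(\<integral>\<^sup>+x. ennreal ((u x)\<^sup>2) \<partial>lborel)
      = (\<integral>\<^sup>+f. (\<integral>\<^sup>+t. ennreal ((u (x' f + t *\<^sub>R e))\<^sup>2) \<partial>lborel) \<partial>(\<Pi>\<^sub>M b\<in>Basis - {e}. lborel))"
    unfolding x'_def
    by (rule nn_integral_lborel_split_Basis[OF _ e]) (use borel_measurable_continuous_onI[OF cont] in measurable)
  also have "\<dots> \<le> (\<integral>\<^sup>+f. (\<integral>\<^sup>+t. ennreal (4 * R\<^sup>2) * (indicator \<Omega> (x' f + t *\<^sub>R e) * ennreal ((pd_seq u j (x' f + t *\<^sub>R e))\<^sup>2)) \<partial>lborel) \<partial>(\<Pi>\<^sub>M b\<in>Basis - {e}. lborel))"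
    by (intro nn_integral_mono slices)
  also have "\<dots> = (\<integral>\<^sup>+x. ennreal (4 * R\<^sup>2) * (indicator \<Omega> x * ennreal ((pd_seq u j x)\<^sup>2)) \<partial>lborel)"
    unfolding x'_def by (rule nn_integral_lborel_split_Basis[OF _ e, symmetric]) (use meas in measurable)
  also have "\<dots> = ennreal (4 * R\<^sup>2) * (\<integral>\<^sup>+x. indicator \<Omega> x * ennreal ((pd_seq u j x)\<^sup>2) \<partial>lborel)"
    using meas by (intro nn_integral_cmult) measurable
  finally show ?thesis .
qed

lemma ennreal_L2ip_le_components:
  fixes v :: "real^'d::finite \<Rightarrow> real^'d"
  assumes v: "continuous_on UNIV v" and \<Omega>: "bounded \<Omega>" "\<Omega> \<in> sets lebesgue"
  shows "ennreal (L2ip \<Omega> v v) \<le> (\<Sum>i\<in>UNIV. \<integral>\<^sup>+x. ennreal ((v x $ i)\<^sup>2) \<partial>lborel)"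
proof -
  have [measurable]: "(\<lambda>x. v x $ i) \<in> borel_measurable borel" for i
    by (intro borel_measurable_continuous_onI bounded_linear.continuous_on[OF bounded_linear_vec_nth v])
  have "set_integrable lebesgue \<Omega> (\<lambda>x. v x \<bullet> v x)"
    using \<Omega> by (intro set_integrable_continuous_bounded continuous_intros v)
  then have "ennreal (L2ip \<Omega> v v) = (\<integral>\<^sup>+x. indicator \<Omega> x * ennreal (v x \<bullet> v x) \<partial>lebesgue)"
    unfolding L2ip_def by (rule ennreal_set_integral_eq_nn_integral) simp
  also have "\<dots> \<le> (\<integral>\<^sup>+x. ennreal (v x \<bullet> v x) \<partial>lebesgue)"
    by (intro nn_integral_mono) (simp add: indicator_def)
  also have "\<dots> = (\<integral>\<^sup>+x. ennreal (v x \<bullet> v x) \<partial>lborel)"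
    by (rule nn_integral_completion)
  also have "\<dots> = (\<integral>\<^sup>+x. (\<Sum>i\<in>UNIV. ennreal ((v x $ i)\<^sup>2)) \<partial>lborel)"
    by (intro nn_integral_cong) (simp add: inner_vec_def sum_ennreal power2_eq_square)
  also have "\<dots> = (\<Sum>i\<in>UNIV. \<integral>\<^sup>+x. ennreal ((v x $ i)\<^sup>2) \<partial>lborel)"
    by (rule nn_integral_sum) measurable
  finally show ?thesis .
qed

lemma ennreal_gradip_Wh:
  assumes tri: "triangulation \<Omega> T" and v: "v \<in> Wh \<Omega> T r" and \<Omega>: "\<Omega> \<in> lmeasurable"
  shows "ennreal (gradip \<Omega> v v) = (\<integral>\<^sup>+x. indicator \<Omega> x * ennreal (gradsq_seq v x) \<partial>lborel)"
proof -
  have "ennreal (gradip \<Omega> v v) = (\<integral>\<^sup>+x. indicator \<Omega> x * ennreal (gradsq v x) \<partial>lebesgue)"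
    unfolding gradip_self
    by (rule ennreal_set_integral_eq_nn_integral[OF set_integrable_gradsq_Wh[OF tri v \<Omega>] gradsq_nonneg])
  also have "\<dots> = (\<integral>\<^sup>+x. indicator \<Omega> x * ennreal (gradsq_seq v x) \<partial>lebesgue)"
    using AE_gradsq_seq_eq_gradsq[OF tri v] by (intro nn_integral_cong_AE) (auto elim: eventually_mono)
  also have "\<dots> = (\<integral>\<^sup>+x. indicator \<Omega> x * ennreal (gradsq_seq v x) \<partial>lborel)"
    by (rule nn_integral_completion)
  finally show ?thesis .
qed

lemma poincare_Wh:
  fixes \<Omega> :: "(real^'d::finite) set"
  assumes tri: "triangulation \<Omega> T" and \<Omega>: "open \<Omega>" "\<Omega> \<subseteq> ball 0 R" and R: "R > 0"
    and v: "v \<in> Wh \<Omega> T r"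
  shows "L2ip \<Omega> v v \<le> 4 * R\<^sup>2 * gradip \<Omega> v v"
proof -
  fix j :: 'd \<comment> \<open>any coordinate direction will do\<close>
  have bounded: "bounded \<Omega>" using \<Omega>(2) by (rule bounded_subset[OF bounded_ball])
  have \<Omega>m: "\<Omega> \<in> lmeasurable" using \<Omega>(1) bounded by (intro lmeasurable_open)
  have [measurable]: "\<Omega> \<in> sets borel" "pd_seq (\<lambda>y. v y $ i) j \<in> borel_measurable borel" for i
    using \<Omega>(1) borel_measurable_pd_seq[OF Wh_component_continuous[OF v]] by auto
  have "ennreal (L2ip \<Omega> v v) \<le> (\<Sum>i\<in>UNIV. \<integral>\<^sup>+x. ennreal ((v x $ i)\<^sup>2) \<partial>lborel)"
    by (rule ennreal_L2ip_le_components[OF Wh_continuous[OF v] bounded fmeasurableD[OF \<Omega>m]])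
  also have "\<dots> \<le> (\<Sum>i\<in>UNIV. ennreal (4 * R\<^sup>2) * (\<integral>\<^sup>+x. indicator \<Omega> x * ennreal ((pd_seq (\<lambda>y. v y $ i) j x)\<^sup>2) \<partial>lborel))"
    using Wh_vanishes[OF v] Wh_line_differentiable[OF tri v]
    by (intro sum_mono poincare_direction[OF R \<Omega> Wh_component_continuous[OF v]]) auto
  also have "\<dots> = ennreal (4 * R\<^sup>2) * (\<integral>\<^sup>+x. (\<Sum>i\<in>UNIV. indicator \<Omega> x * ennreal ((pd_seq (\<lambda>y. v y $ i) j x)\<^sup>2)) \<partial>lborel)"
    by (subst nn_integral_sum) (measurable, simp add: sum_distrib_left)
  also have "\<dots> = ennreal (4 * R\<^sup>2) * (\<integral>\<^sup>+x. indicator \<Omega> x * ennreal (\<Sum>i\<in>UNIV. (pd_seq (\<lambda>y. v y $ i) j x)\<^sup>2) \<partial>lborel)"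
    by (simp add: sum_distrib_left[symmetric] sum_ennreal)
  also have "\<dots> \<le> ennreal (4 * R\<^sup>2) * (\<integral>\<^sup>+x. indicator \<Omega> x * ennreal (gradsq_seq v x) \<partial>lborel)"
    unfolding gradsq_seq_def
    by (intro mult_left_mono nn_integral_mono ennreal_leI sum_mono member_le_sum) auto
  also have "\<dots> = ennreal (4 * R\<^sup>2 * gradip \<Omega> v v)"
    by (simp add: ennreal_gradip_Wh[OF tri v \<Omega>m] ennreal_mult gradip_self_nonneg)
  finally show ?thesis by (simp add: ennreal_le_iff gradip_self_nonneg)
qed

section \<open>Energy estimate\<close>

lemma inner_Young:
  fixes f v :: "'a::real_inner"
  assumes "a > 0"
  shows "2 * (f \<bullet> v) \<le> a * (v \<bullet> v) + (f \<bullet> f) / a"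
proof -
  have "0 \<le> (a *\<^sub>R v - f) \<bullet> (a *\<^sub>R v - f)" by simp
  also have "\<dots> = a * (a * (v \<bullet> v) + (f \<bullet> f) / a - 2 * (f \<bullet> v))"
    using assms by (simp add: inner_diff_left inner_diff_right inner_commute field_simps)
  finally show ?thesis using assms by (simp add: zero_le_mult_iff)
qed

lemma btri_self: "btri \<Omega> u v v = 0"
  by (simp add: btri_def)

lemma L2ip_scaleR_left: "L2ip \<Omega> (\<lambda>x. c *\<^sub>R g x) w = c * L2ip \<Omega> g w"
  by (simp add: L2ip_def)

lemma L2ip_backward_difference:
  assumes v0: "continuous_on UNIV v0" and v1: "continuous_on UNIV v1"
    and \<Omega>: "bounded \<Omega>" "\<Omega> \<in> sets lebesgue"
  shows "2 * L2ip \<Omega> (v1 - v0) v1 = L2ip \<Omega> v1 v1 - L2ip \<Omega> v0 v0 + L2ip \<Omega> (v1 - v0) (v1 - v0)"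
proof -
  have int: "set_integrable lebesgue \<Omega> (\<lambda>x. v1 x \<bullet> v1 x)" "set_integrable lebesgue \<Omega> (\<lambda>x. v0 x \<bullet> v0 x)"
    "set_integrable lebesgue \<Omega> (\<lambda>x. (v1 x - v0 x) \<bullet> (v1 x - v0 x))"
    by (intro set_integrable_continuous_bounded continuous_intros v0 v1 \<Omega>)+
  have "2 * ((v1 x - v0 x) \<bullet> v1 x) = v1 x \<bullet> v1 x - v0 x \<bullet> v0 x + (v1 x - v0 x) \<bullet> (v1 x - v0 x)" for x
    by (simp add: inner_diff_left inner_diff_right inner_commute)
  then show ?thesis
    using int by (simp add: L2ip_def fun_diff_def flip: set_integral_mult_right)
qed

lemma L2ip_Young:
  fixes f v :: "real^'d::finite \<Rightarrow> real^'d"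
  assumes f: "L2field \<Omega> f" and v: "continuous_on UNIV v" and \<Omega>: "bounded \<Omega>" "\<Omega> \<in> sets lebesgue"
    and a: "a > 0"
  shows "2 * L2ip \<Omega> f v \<le> a * L2ip \<Omega> v v + L2ip \<Omega> f f / a"
proof -
  have ff: "set_integrable lebesgue \<Omega> (\<lambda>x. f x \<bullet> f x)"
    using f by (simp add: L2field_def power2_norm_eq_inner)
  have vv: "set_integrable lebesgue \<Omega> (\<lambda>x. v x \<bullet> v x)"
    using \<Omega> by (intro set_integrable_continuous_bounded continuous_intros v)
  have [measurable]: "f \<in> borel_measurable lebesgue" using f by (simp add: L2field_def)
  have "v \<in> borel_measurable lebesgue"
    using borel_measurable_continuous_onI[OF v] by (intro measurable_completion) simp
  then have "set_borel_measurable lebesgue \<Omega> (\<lambda>x. f x \<bullet> v x)"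
    using \<Omega>(2) unfolding set_borel_measurable_def by measurable
  moreover have "\<bar>f x \<bullet> v x\<bar> \<le> \<bar>f x \<bullet> f x + v x \<bullet> v x\<bar>" for x
    using inner_Young[of 1 "f x" "v x"] inner_Young[of 1 "- f x" "v x"] by (simp add: abs_le_iff)
  ultimately have fv: "set_integrable lebesgue \<Omega> (\<lambda>x. f x \<bullet> v x)"
    by (intro set_integrable_bound[OF set_integral_add(1)[OF ff vv]]) auto
  have "(LINT x:\<Omega>|lebesgue. 2 * (f x \<bullet> v x)) \<le> (LINT x:\<Omega>|lebesgue. a * (v x \<bullet> v x) + (f x \<bullet> f x) / a)"
    using ff vv fv a inner_Young by (intro set_integral_mono) auto
  then show ?thesis using ff vv by (simp add: L2ip_def)
qed

lemma L2ip_forcing_bound: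
  fixes f v :: "real^'d::finite \<Rightarrow> real^'d"
  assumes f: "L2field \<Omega> f" and v: "continuous_on UNIV v" and \<Omega>: "bounded \<Omega>" "\<Omega> \<in> sets lebesgue"
    and \<nu>: "\<nu> > 0" and CP: "CP > 0" and poincare: "L2ip \<Omega> v v \<le> CP * gradip \<Omega> v v"
  shows "2 * L2ip \<Omega> f v \<le> \<nu> * gradip \<Omega> v v + CP / \<nu> * L2ip \<Omega> f f"
proof -
  have "2 * L2ip \<Omega> f v \<le> \<nu> / CP * L2ip \<Omega> v v + L2ip \<Omega> f f / (\<nu> / CP)"
    using \<nu> CP by (intro L2ip_Young[OF f v \<Omega>]) simp
  also have "\<nu> / CP * L2ip \<Omega> v v \<le> \<nu> * gradip \<Omega> v v"
    using poincare \<nu> CP by (simp add: field_simps)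
  finally show ?thesis by (simp add: ac_simps)
qed

lemma energy_step:
  fixes \<Omega> :: "(real^'d::finite) set" and v0 v1 f1 :: "real^'d \<Rightarrow> real^'d" and q1 :: "real^'d \<Rightarrow> real"
  assumes \<Omega>: "open \<Omega>" "bounded \<Omega>" "\<Omega> \<noteq> {}"
    and \<nu>: "\<nu> > 0" and \<Delta>t: "\<Delta>t > 0" and CP: "CP > 0"
    and v0: "continuous_on UNIV v0" and v1: "continuous_on UNIV v1"
    and poincare: "L2ip \<Omega> v1 v1 \<le> CP * gradip \<Omega> v1 v1"
    and f1: "L2field \<Omega> f1"
    and momentum: "L2ip \<Omega> (\<lambda>x. inverse \<Delta>t *\<^sub>R (v1 x - v0 x)) v1 + (\<nu> + \<mu> * \<tau> * k0) * gradip \<Omega> v1 v1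
        + btri \<Omega> v0 v1 v1 - L2ips \<Omega> (divg v1) q1 = L2ip \<Omega> f1 v1"
    and div_free: "L2ips \<Omega> (divg v1) q1 = 0"
    and kinetic: "(k1 - k0) / \<Delta>t + sqrt 2 / 2 * inverse \<tau> * k1
        = 1 / measure lebesgue \<Omega> * (LINT x:\<Omega>|lebesgue. \<mu> * \<tau> * k0 * gradsq v1 x)"
  shows "L2ip \<Omega> v1 v1 + 2 * measure lebesgue \<Omega> * k1
      + \<Delta>t * (\<nu> * gradip \<Omega> v1 v1 + sqrt 2 * inverse \<tau> * measure lebesgue \<Omega> * k1)
      + L2ip \<Omega> (v1 - v0) (v1 - v0)
      \<le> CP / \<nu> * \<Delta>t * L2ip \<Omega> f1 f1 + L2ip \<Omega> v0 v0 + 2 * measure lebesgue \<Omega> * k0"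
proof -
  define m where "m = measure lebesgue \<Omega>"
  define G where "G = gradip \<Omega> v1 v1"
  define D where "D = L2ip \<Omega> (v1 - v0) v1"
  define F where "F = L2ip \<Omega> f1 v1"
  have m: "m > 0" unfolding m_def using \<Omega> by (rule measure_lebesgue_open_pos)
  have \<Omega>L: "\<Omega> \<in> sets lebesgue" using \<Omega>(1) by (simp add: borel_open sets_completionI_sets)
  have "L2ip \<Omega> (\<lambda>x. inverse \<Delta>t *\<^sub>R (v1 x - v0 x)) v1 = inverse \<Delta>t * D"
    unfolding L2ip_scaleR_left D_def by (simp add: fun_diff_def)
  with momentum div_free have "inverse \<Delta>t * D + (\<nu> + \<mu> * \<tau> * k0) * G = F"
    by (simp add: btri_self G_def F_def)
  with \<Delta>t have "2 * D + 2 * \<Delta>t * (\<nu> + \<mu> * \<tau> * k0) * G = 2 * \<Delta>t * F"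
    by (simp add: field_simps)
  moreover have "2 * D = L2ip \<Omega> v1 v1 - L2ip \<Omega> v0 v0 + L2ip \<Omega> (v1 - v0) (v1 - v0)"
    unfolding D_def by (rule L2ip_backward_difference[OF v0 v1 \<Omega>(2) \<Omega>L])
  moreover have "2 * m * (k1 - k0) + sqrt 2 * inverse \<tau> * m * \<Delta>t * k1 = 2 * \<Delta>t * (\<mu> * \<tau> * k0 * G)"
  proof -
    have "(LINT x:\<Omega>|lebesgue. \<mu> * \<tau> * k0 * gradsq v1 x) = \<mu> * \<tau> * k0 * G"
      by (simp add: gradip_self G_def)
    with kinetic have "(k1 - k0) / \<Delta>t + sqrt 2 / 2 * inverse \<tau> * k1 = \<mu> * \<tau> * k0 * G / m"
      by (simp add: m_def)
    with \<Delta>t m have "m * (k1 - k0) + sqrt 2 / 2 * inverse \<tau> * m * \<Delta>t * k1 = \<Delta>t * (\<mu> * \<tau> * k0 * G)"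
      by (simp add: field_simps)
    then show ?thesis by (simp add: algebra_simps)
  qed
  moreover from L2ip_forcing_bound[OF f1 v1 \<Omega>(2) \<Omega>L \<nu> CP poincare]
  have "\<Delta>t * (2 * F) \<le> \<Delta>t * (\<nu> * G + CP / \<nu> * L2ip \<Omega> f1 f1)"
    using \<Delta>t unfolding F_def G_def by (intro mult_left_mono) auto
  ultimately show ?thesis
    unfolding m_def[symmetric] G_def[symmetric] by (simp add: algebra_simps)
qed

lemma telescoping_le:
  fixes a X D E :: "nat \<Rightarrow> real"
  assumes "\<And>n. n < N \<Longrightarrow> a (Suc n) + c * X n + D n \<le> E n + a n"
  shows "a N + c * (\<Sum>n<N. X n) + (\<Sum>n<N. D n) \<le> (\<Sum>n<N. E n) + a 0"
  using assms
proof (induction N)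
  case (Suc N)
  then have "a N + c * (\<Sum>n<N. X n) + (\<Sum>n<N. D n) \<le> (\<Sum>n<N. E n) + a 0"
    and "a (Suc N) + c * X N + D N \<le> E N + a N" by auto
  then show ?case by (simp add: distrib_left)
qed simp

lemma energy_estimate:
  fixes \<Omega> :: "(real^'d::finite) set" and V :: "(real^'d \<Rightarrow> real^'d) set" and Q :: "(real^'d \<Rightarrow> real) set"
    and v f :: "nat \<Rightarrow> real^'d \<Rightarrow> real^'d" and q :: "nat \<Rightarrow> real^'d \<Rightarrow> real"
  assumes \<Omega>: "open \<Omega>" "bounded \<Omega>" "\<Omega> \<noteq> {}" and \<nu>: "\<nu> > 0" and CP: "CP > 0" and \<Delta>t: "\<Delta>t > 0"
    and V: "\<And>w. w \<in> V \<Longrightarrow> continuous_on UNIV w"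
      "\<And>w. w \<in> V \<Longrightarrow> L2ip \<Omega> w w \<le> CP * gradip \<Omega> w w"
    and v: "\<forall>n\<le>N. v n \<in> V" and q: "\<forall>n<N. q (Suc n) \<in> Q" and f: "\<forall>n<N. L2field \<Omega> (f n)"
    and momentum: "\<forall>n<N. \<forall>w\<in>V.
      L2ip \<Omega> (\<lambda>x. inverse \<Delta>t *\<^sub>R (v (Suc n) x - v n x)) w
      + (\<nu> + \<mu> * \<tau> * k n) * gradip \<Omega> (v (Suc n)) w
      + btri \<Omega> (v n) (v (Suc n)) w - L2ips \<Omega> (divg w) (q (Suc n))
      = L2ip \<Omega> (f n) w"
    and div_free: "\<forall>n<N. \<forall>p\<in>Q. L2ips \<Omega> (divg (v (Suc n))) p = 0"
    and kinetic: "\<forall>n<N. (k (Suc n) - k n) / \<Delta>t + sqrt 2 / 2 * inverse \<tau> * k (Suc n)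
      = 1 / measure lebesgue \<Omega> * (LINT x:\<Omega>|lebesgue. \<mu> * \<tau> * k n * gradsq (v (Suc n)) x)"
  shows "L2ip \<Omega> (v N) (v N) + 2 * measure lebesgue \<Omega> * k N
     + \<Delta>t * (\<Sum>n<N. \<nu> * gradip \<Omega> (v (Suc n)) (v (Suc n))
                 + sqrt 2 * inverse \<tau> * measure lebesgue \<Omega> * k (Suc n))
     + (\<Sum>n<N. L2ip \<Omega> (v (Suc n) - v n) (v (Suc n) - v n))
     \<le> (\<Sum>n<N. CP / \<nu> * \<Delta>t * L2ip \<Omega> (f n) (f n))
       + L2ip \<Omega> (v 0) (v 0) + 2 * measure lebesgue \<Omega> * k 0"
proof -
  define a where "a n = L2ip \<Omega> (v n) (v n) + 2 * measure lebesgue \<Omega> * k n" for n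
  have "a (Suc n) + \<Delta>t * (\<nu> * gradip \<Omega> (v (Suc n)) (v (Suc n)) + sqrt 2 * inverse \<tau> * measure lebesgue \<Omega> * k (Suc n))
      + L2ip \<Omega> (v (Suc n) - v n) (v (Suc n) - v n)
      \<le> CP / \<nu> * \<Delta>t * L2ip \<Omega> (f n) (f n) + a n" if n: "n < N" for n
  proof -
    have vn: "v n \<in> V" "v (Suc n) \<in> V" using v n by auto
    show ?thesis
      using energy_step[OF \<Omega> \<nu> \<Delta>t CP V(1)[OF vn(1)] V(1)[OF vn(2)] V(2)[OF vn(2)] f[rule_format, OF n]
          momentum[rule_format, OF n vn(2)] div_free[rule_format, OF n q[rule_format, OF n]]
          kinetic[rule_format, OF n]]
      by (simp add: a_def add.assoc)
  qed
  then show ?thesis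
    using telescoping_le[where a=a] by (simp add: a_def add.assoc)
qed

theorem theorem5p1:
  fixes \<Omega> :: "(real^'d) set" and T :: "(real^'d) set set" and r :: nat
    and \<nu> \<mu> \<tau> :: real
  assumes dim: "CARD('d) = 2 \<or> CARD('d) = 3"
    and dom: "open \<Omega>" "bounded \<Omega>" "connected \<Omega>" "\<Omega> \<noteq> {}"
    and tri: "triangulation \<Omega> T"
    and deg: "r \<ge> 2"
    and infsup: "inf_sup \<Omega> (Wh \<Omega> T r) (Qh \<Omega> T r)"
    and par: "\<nu> > 0" "\<mu> > 0" "\<tau> > 0"
  shows "\<exists>C. \<forall>(\<Delta>t::real) (N::nat) (v :: nat \<Rightarrow> real^'d \<Rightarrow> real^'d)
             (q :: nat \<Rightarrow> real^'d \<Rightarrow> real) (k :: nat \<Rightarrow> real)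
             (f :: real \<Rightarrow> real^'d \<Rightarrow> real^'d).
     \<Delta>t > 0 \<and>
     (\<forall>n\<le>N. v n \<in> Wh \<Omega> T r) \<and>
     (\<forall>n<N. q (Suc n) \<in> Qh \<Omega> T r) \<and>
     (\<forall>n<N. L2field \<Omega> (f (real (Suc n) * \<Delta>t))) \<and>
     (\<forall>n<N. \<forall>w\<in>Wh \<Omega> T r.
        L2ip \<Omega> (\<lambda>x. inverse \<Delta>t *\<^sub>R (v (Suc n) x - v n x)) w
        + (\<nu> + \<mu> * \<tau> * k n) * gradip \<Omega> (v (Suc n)) w
        + btri \<Omega> (v n) (v (Suc n)) w
        - L2ips \<Omega> (divg w) (q (Suc n))
        = L2ip \<Omega> (f (real (Suc n) * \<Delta>t)) w) \<and>
     (\<forall>n<N. \<forall>p\<in>Qh \<Omega> T r. L2ips \<Omega> (divg (v (Suc n))) p = 0) \<and>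
     (\<forall>n<N. (k (Suc n) - k n) / \<Delta>t + sqrt 2 / 2 * inverse \<tau> * k (Suc n)
        = 1 / measure lebesgue \<Omega> *
          (LINT x:\<Omega>|lebesgue. \<mu> * \<tau> * k n * gradsq (v (Suc n)) x))
     \<longrightarrow>
     L2ip \<Omega> (v N) (v N) + 2 * measure lebesgue \<Omega> * k N
     + \<Delta>t * (\<Sum>n<N. \<nu> * gradip \<Omega> (v (Suc n)) (v (Suc n))
                 + sqrt 2 * inverse \<tau> * measure lebesgue \<Omega> * k (Suc n))
     + (\<Sum>n<N. L2ip \<Omega> (v (Suc n) - v n) (v (Suc n) - v n))
     \<le> (\<Sum>n<N. C * \<Delta>t * L2ip \<Omega> (f (real (Suc n) * \<Delta>t)) (f (real (Suc n) * \<Delta>t)))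
       + L2ip \<Omega> (v 0) (v 0) + 2 * measure lebesgue \<Omega> * k 0"
proof -
  obtain R where R: "R > 0" "\<Omega> \<subseteq> ball 0 R" using bounded_subset_ballD[OF dom(2)] by blast
  have poincare: "L2ip \<Omega> w w \<le> 4 * R\<^sup>2 * gradip \<Omega> w w" if "w \<in> Wh \<Omega> T r" for w
    by (rule poincare_Wh[OF tri dom(1) R(2) R(1) that])
  show ?thesis
    by (intro exI[of _ "4 * R\<^sup>2 / \<nu>"] allI impI, elim conjE,
        rule energy_estimate[OF dom(1,2,4) par(1) _ _ Wh_continuous poincare])
      (use R(1) in auto)
qed

end
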